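(* Let $n\ge2$, $0<\alpha\le1/\sqrt2$, $\nu=\pi/4$, $x_i = -1+\frac{2i}{n-1}$ ($i=0,\dots,n-1$), and define $\bar{\mathbf{X}}\in\mathbb{R}^{n\times n}$ by $\bar{\mathbf{X}}_{ij} = \mathbf{1}\{\|\mathbf{R}_\nu^\top(x_i,x_j)^\top\|_\infty\le\alpha\}$ with $\mathbf{R}_\nu = \begin{bmatrix}\cos\nu&-\sin\nu\\ \sin\nu&\cos\nu\end{bmatrix}$. Then $$\|\bar{\mathbf{X}}\|_F^2\ge n^2\alpha^2 - 5n.$$
   Context: $\|\cdot\|_F$ is the Frobenius norm. *)

theory Defs
  imports Complex_Main
begin

definition rotT :: "real \<Rightarrow> real \<times> real \<Rightarrow> real \<times> real" where
  "rotT nu v = (cos nu * fst v + sin nu * snd v, - sin nu * fst v + cos nu * snd v)"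

definition linf_norm2 :: "real \<times> real \<Rightarrow> real" where
  "linf_norm2 v = max \<bar>fst v\<bar> \<bar>snd v\<bar>"

definition frob_norm :: "nat \<Rightarrow> (nat \<Rightarrow> nat \<Rightarrow> real) \<Rightarrow> real" where
  "frob_norm n A = sqrt (\<Sum>i<n. \<Sum>j<n. (A i j)^2)"

definition grid_pt :: "nat \<Rightarrow> nat \<Rightarrow> real" where
  "grid_pt n i = -1 + 2 * real i / (real n - 1)"

definition Xbar :: "nat \<Rightarrow> real \<Rightarrow> real \<Rightarrow> nat \<Rightarrow> nat \<Rightarrow> real" where
  "Xbar n alpha nu i j =
     (if linf_norm2 (rotT nu (grid_pt n i, grid_pt n j)) \<le> alpha then 1 else 0)"

end

theory Submission
  imports Defs
begin

text \<open>With p = n - 1, the rotation by pi/4 maps the grid point (x_i, x_j) to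
  (i + j - p, j - i) scaled by sqrt 2 / p. Hence X-bar has a 1 at every lattice point (i, j)
  with |i + j - p| \<le> K and |j - i| \<le> K, for any integer K \<le> alpha p / sqrt 2.
  This square, tilted by 45 degrees, contains two interleaved K \<times> K grids, so the squared
  Frobenius norm is at least 2 K^2. Taking K = floor (alpha p / sqrt 2) loses O(alpha p) against
  the area alpha^2 p^2 of the tilted square, and replacing p by n costs another O(n).\<close>

lemma linf_norm2_rotT_pi4:
  "linf_norm2 (rotT (pi / 4) (x, y)) = max (\<bar>x + y\<bar> / sqrt 2) (\<bar>y - x\<bar> / sqrt 2)"
proof -
  have "rotT (pi / 4) (x, y) = ((x + y) / sqrt 2, (y - x) / sqrt 2)"
    unfolding rotT_def cos_45 sin_45 by (simp add: field_simps)
  then show ?thesis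
    unfolding linf_norm2_def by (simp add: abs_divide)
qed

lemma grid_pt_add:
  assumes "n \<noteq> 1"
  shows "grid_pt n i + grid_pt n j = 2 * (real i + real j - (real n - 1)) / (real n - 1)"
proof -
  define q where "q = real n - 1"
  have "q \<noteq> 0" using assms unfolding q_def by simp
  then show ?thesis unfolding grid_pt_def q_def[symmetric] by (simp add: field_simps)
qed

lemma grid_pt_diff:
  "grid_pt n j - grid_pt n i = 2 * (real j - real i) / (real n - 1)"
  unfolding grid_pt_def by (simp add: diff_divide_distrib right_diff_distrib)

lemma Xbar_pi4:
  assumes "n \<ge> 2"
  shows "Xbar n alpha (pi / 4) i j =
    (if sqrt 2 * \<bar>real i + real j - (real n - 1)\<bar> \<le> alpha * (real n - 1) \<and>
        sqrt 2 * \<bar>real j - real i\<bar> \<le> alpha * (real n - 1) then 1 else 0)"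
proof -
  have q: "real n - 1 > 0" using assms by simp
  have scale: "\<bar>2 * s / (real n - 1)\<bar> / sqrt 2 = sqrt 2 * \<bar>s\<bar> / (real n - 1)" for s :: real
    using q by (simp add: abs_mult field_simps)
  have "linf_norm2 (rotT (pi / 4) (grid_pt n i, grid_pt n j)) =
      max (sqrt 2 * \<bar>real i + real j - (real n - 1)\<bar> / (real n - 1))
          (sqrt 2 * \<bar>real j - real i\<bar> / (real n - 1))"
    using assms by (simp only: linf_norm2_rotT_pi4 grid_pt_add grid_pt_diff scale)
  then show ?thesis
    unfolding Xbar_def by (simp only: max.bounded_iff pos_divide_le_eq[OF q])
qed

lemma frob_norm_sq_indicator:
  assumes "\<And>i j. A i j = 0 \<or> A i j = 1"
  shows "(frob_norm n A)^2 = card {(i, j) \<in> {..<n} \<times> {..<n}. A i j = 1}"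
proof -
  have sq: "(A i j)^2 = (if A i j = 1 then 1 else 0)" for i j
    using assms[of i j] by auto
  have "(frob_norm n A)^2 = (\<Sum>i<n. \<Sum>j<n. (A i j)^2)"
    unfolding frob_norm_def by (simp add: sum_nonneg)
  also have "\<dots> = (\<Sum>(i, j) \<in> {..<n} \<times> {..<n}. (A i j)^2)"
    by (simp add: sum.cartesian_product)
  also have "\<dots> = (\<Sum>(i, j) \<in> {..<n} \<times> {..<n}. if A i j = 1 then 1 else 0)"
    by (simp add: sq)
  also have "\<dots> = card {(i, j) \<in> {..<n} \<times> {..<n}. A i j = 1}"
    by (simp add: sum.If_cases case_prod_beta) (rule arg_cong[where f = card], auto)
  finally show ?thesis .
qed

text \<open>The lattice points with |i + j - p| \<le> K and |j - i| \<le> K, written without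
  subtraction on nat.\<close>

definition lattice_diamond :: "nat \<Rightarrow> nat \<Rightarrow> (nat \<times> nat) set" where
  "lattice_diamond p K = {(i, j). p \<le> i + j + K \<and> i + j \<le> p + K \<and> i \<le> j + K \<and> j \<le> i + K}"

lemma lattice_diamond_subset:
  assumes "2 * K \<le> p"
  shows "lattice_diamond p K \<subseteq> {..p} \<times> {..p}"
  using assms unfolding lattice_diamond_def by auto

lemma card_lattice_diamond_ge:
  assumes "2 * K \<le> p"
  shows "2 * K^2 \<le> card (lattice_diamond p K)"
proof -
  define c where "c = p div 2"
  have c: "2 * c \<le> p" "p \<le> 2 * c + 1" "K \<le> c" using assms unfolding c_def by auto
  define D where "D = {..1::nat} \<times> {..<K} \<times> {..<K}"
  txt \<open>Two interleaved K \<times> K grids tilted by 45 degrees; t is the parity of i + j + K + 1.\<close>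
  define f where "f = (\<lambda>(t, a, b). (c + t + a - b, c + 1 + a + b - K))"
  have f_inv: "fst (f (t, a, b)) + b = c + t + a" "snd (f (t, a, b)) + K = c + 1 + a + b"
    if "b < K" for t a b
    using that c(3) unfolding f_def by simp_all
  have f_eq: "t = t' \<and> a = a' \<and> b = b'"
    if "t \<le> 1" "t' \<le> 1" "b < K" "b' < K" "f (t, a, b) = f (t', a', b')" for t a b t' a' b'
  proof -
    from that(5) have "fst (f (t, a, b)) = fst (f (t', a', b'))" "snd (f (t, a, b)) = snd (f (t', a', b'))"
      by simp_all
    with f_inv[OF that(3), of t a] f_inv[OF that(4), of t' a'] have "t + 2 * a = t' + 2 * a'" "a + b = a' + b'"
      by linarith+
    moreover from this(1) that(1,2) have "t = t'" by presburger
    ultimately show ?thesis by (intro conjI) linarith+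
  qed
  have "inj_on f D"
    unfolding inj_on_def D_def using f_eq by fastforce
  moreover have "f (t, a, b) \<in> lattice_diamond p K" if "t \<le> 1" "a < K" "b < K" for t a b
    using f_inv[OF that(3), of t a] that c(1,2)
    unfolding lattice_diamond_def mem_Collect_eq case_prod_beta by (intro conjI; linarith)
  then have "f ` D \<subseteq> lattice_diamond p K"
    unfolding D_def by force
  moreover have "finite (lattice_diamond p K)"
    using lattice_diamond_subset[OF assms] finite_subset by blast
  ultimately have "card D \<le> card (lattice_diamond p K)"
    by (rule card_inj_on_le)
  then show ?thesis
    unfolding D_def by (simp add: card_cartesian_product power2_eq_square)
qed

lemma Xbar_pi4_lattice_diamond:
  assumes "n \<ge> 2" and "sqrt 2 * real K \<le> alpha * (real n - 1)"
    and "(i, j) \<in> lattice_diamond (n - 1) K"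
  shows "Xbar n alpha (pi / 4) i j = 1"
proof -
  have "\<bar>real i + real j - (real n - 1)\<bar> \<le> real K" "\<bar>real j - real i\<bar> \<le> real K"
    using assms(1,3) unfolding lattice_diamond_def by auto
  then have "sqrt 2 * \<bar>real i + real j - (real n - 1)\<bar> \<le> sqrt 2 * real K"
      "sqrt 2 * \<bar>real j - real i\<bar> \<le> sqrt 2 * real K"
    by (simp_all add: mult_left_mono)
  then have "sqrt 2 * \<bar>real i + real j - (real n - 1)\<bar> \<le> alpha * (real n - 1)"
      "sqrt 2 * \<bar>real j - real i\<bar> \<le> alpha * (real n - 1)"
    using assms(2) by linarith+
  then show ?thesis
    by (simp add: Xbar_pi4[OF assms(1)])
qed

lemma card_Xbar_pi4_support_ge:
  assumes "n \<ge> 2" and "2 * K \<le> n - 1" and "sqrt 2 * real K \<le> alpha * (real n - 1)"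
  shows "2 * K^2 \<le> card {(i, j) \<in> {..<n} \<times> {..<n}. Xbar n alpha (pi / 4) i j = 1}"
proof -
  have "lattice_diamond (n - 1) K \<subseteq> {(i, j) \<in> {..<n} \<times> {..<n}. Xbar n alpha (pi / 4) i j = 1}"
    using lattice_diamond_subset[OF assms(2)] Xbar_pi4_lattice_diamond[OF assms(1,3)] assms(1)
    by fastforce
  moreover have "finite {(i, j) \<in> {..<n} \<times> {..<n}. Xbar n alpha (pi / 4) i j = 1}"
    by (rule finite_subset[of _ "{..<n} \<times> {..<n}"]) auto
  ultimately show ?thesis
    using card_lattice_diamond_ge[OF assms(2)] card_mono by (meson le_trans)
qed

lemma nat_floor_square_ge:
  fixes m :: real
  assumes "0 \<le> m"
  shows "m^2 - 2 * m \<le> real (nat \<lfloor>m\<rfloor>)^2"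
proof (cases "m \<le> 2")
  case True
  then have "m^2 \<le> 2 * m"
    using assms by (simp add: power2_eq_square mult_right_mono)
  then show ?thesis
    using zero_le_power2[of "real (nat \<lfloor>m\<rfloor>)"] by linarith
next
  case False
  have "m - 1 \<le> real (nat \<lfloor>m\<rfloor>)" using assms by linarith
  then have "(m - 1)^2 \<le> real (nat \<lfloor>m\<rfloor>)^2" using False by (intro power_mono) auto
  then show ?thesis by (simp add: power2_diff)
qed

definition diamond_radius :: "nat \<Rightarrow> real \<Rightarrow> nat" where
  "diamond_radius p alpha = nat \<lfloor>alpha * real p / sqrt 2\<rfloor>"

lemma mult_div_sqrt2_le_half:
  assumes "0 \<le> alpha" and "alpha \<le> 1 / sqrt 2"
  shows "alpha * real p / sqrt 2 \<le> real p / 2"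
proof -
  have "alpha / sqrt 2 \<le> 1 / 2"
    using divide_right_mono[OF assms(2), of "sqrt 2"] by simp
  then show ?thesis
    using mult_right_mono[of "alpha / sqrt 2" "1 / 2" "real p"] by simp
qed

lemma diamond_radius_le:
  assumes "0 \<le> alpha" and "alpha \<le> 1 / sqrt 2"
  shows "2 * diamond_radius p alpha \<le> p"
    and "sqrt 2 * real (diamond_radius p alpha) \<le> alpha * real p"
proof -
  have "0 \<le> alpha * real p / sqrt 2"
    using assms(1) by simp
  then have "real (diamond_radius p alpha) \<le> alpha * real p / sqrt 2"
    unfolding diamond_radius_def by linarith
  then have "2 * real (diamond_radius p alpha) \<le> real p"
    using mult_div_sqrt2_le_half[OF assms, of p] by linarith
  then show "2 * diamond_radius p alpha \<le> p"
    by linarith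
  show "sqrt 2 * real (diamond_radius p alpha) \<le> alpha * real p"
    using \<open>real (diamond_radius p alpha) \<le> _\<close> by (simp add: field_simps)
qed

lemma diamond_radius_sq_ge:
  assumes "n \<ge> 1" and "0 \<le> alpha" and "alpha \<le> 1 / sqrt 2"
  shows "real n^2 * alpha^2 - 5 * real n \<le> 2 * real (diamond_radius (n - 1) alpha)^2"
proof -
  define p where "p = n - 1"
  define m where "m = alpha * real p / sqrt 2"
  have n: "real n = real p + 1"
    using assms(1) unfolding p_def by simp
  have m: "0 \<le> m" "2 * m \<le> real p" "2 * m^2 = alpha^2 * real p^2"
    using assms(2) mult_div_sqrt2_le_half[OF assms(2,3), of p] unfolding m_def
    by (simp, linarith, simp add: power_divide power_mult_distrib)
  have "alpha^2 \<le> 1 / 2"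
    using power_mono[OF assms(3), of 2] assms(2) by (simp add: power_divide)
  then have "alpha^2 * (2 * real p + 1) \<le> 1 / 2 * (2 * real p + 1)"
    by (rule mult_right_mono) simp
  then have "real n^2 * alpha^2 \<le> 2 * m^2 + real p + 1 / 2"
    unfolding n m(3) by (simp add: algebra_simps power2_eq_square)
  moreover have "m^2 - 2 * m \<le> real (diamond_radius p alpha)^2"
    unfolding diamond_radius_def m_def[symmetric] using m(1) by (rule nat_floor_square_ge)
  ultimately show ?thesis
    using m(1,2) n unfolding p_def by linarith
qed

theorem mainTheorem7:
  fixes n :: nat and alpha :: real
  assumes "n \<ge> 2" and "0 < alpha" and "alpha \<le> 1 / sqrt 2"
  shows "(frob_norm n (Xbar n alpha (pi / 4))) ^ 2 \<ge> real n ^ 2 * alpha ^ 2 - 5 * real n"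
proof -
  define K where "K = diamond_radius (n - 1) alpha"
  define S where "S = {(i, j) \<in> {..<n} \<times> {..<n}. Xbar n alpha (pi / 4) i j = 1}"
  have "2 * K \<le> n - 1" "sqrt 2 * real K \<le> alpha * (real n - 1)"
    using diamond_radius_le[of alpha "n - 1"] assms unfolding K_def by (simp_all add: of_nat_diff)
  then have "2 * K^2 \<le> card S"
    unfolding S_def by (rule card_Xbar_pi4_support_ge[OF assms(1)])
  then have "real (2 * K^2) \<le> real (card S)"
    by (simp only: of_nat_le_iff)
  also have "\<dots> = (frob_norm n (Xbar n alpha (pi / 4)))^2"
    unfolding S_def by (rule frob_norm_sq_indicator[symmetric]) (simp add: Xbar_def)
  finally have "2 * real K^2 \<le> (frob_norm n (Xbar n alpha (pi / 4)))^2"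
    by simp
  moreover have "real n^2 * alpha^2 - 5 * real n \<le> 2 * real K^2"
    unfolding K_def using assms by (intro diamond_radius_sq_ge) auto
  ultimately show ?thesis
    by linarith
qed

end
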